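(* For the unstructured search problem with marked set $M$, $1\le |M|<2^n$, $$\dim(\mathfrak g_{\mathrm{QWOA,Search}})=\begin{cases}4,& |M|=1,\\ 5,&\text{otherwise.}\end{cases}$$
   Context: Unstructured search: solution space $\mathcal S=\{0,1\}^n$, cost $C:\mathcal S\to\{0,1\}$, marked set $M=\{z:C(z)=1\}$. $H_C$ is the diagonal matrix with $H_C|z\rangle=C(z)|z\rangle$ (projector onto marked basis states); $H_M$ is the $2^n\times 2^n$ all-ones matrix. $\mathfrak g_{\mathrm{QWOA,Search}}$ is the real Lie algebra generated by $iH_C$ and $iH_M$, i.e. the smallest real linear subspace of $2^n\times 2^n$ complex matrices containing them and closed under the commutator $[A,B]=AB-BA$; its dimension is its real dimension. *)

theory Defs
  imports "HOL-Analysis.Analysis"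
begin

text \<open>Basis states z \<in> {0,1}^n are modelled as bool^'n (n = CARD('n)).
 Operators on the 2^n-dimensional space are complex matrices indexed by basis states.\<close>

type_synonym 'n op = "complex ^ (bool ^ 'n) ^ (bool ^ 'n)"

definition H_C :: "(bool ^ 'n) set \<Rightarrow> 'n::finite op" where
  "H_C M = (\<chi> z w. if z = w \<and> z \<in> M then 1 else 0)"

definition H_M :: "'n::finite op" where
  "H_M = (\<chi> z w. 1)"

definition iop :: "'n::finite op \<Rightarrow> 'n op" where
  "iop A = (\<chi> z w. \<i> * A $ z $ w)"

definition commutator :: "'n::finite op \<Rightarrow> 'n op \<Rightarrow> 'n op" where
  "commutator A B = A ** B - B ** A"

definition lie_generated :: "'n::finite op set \<Rightarrow> 'n op set" where
  "lie_generated G = \<Inter>{L. subspace L \<and> G \<subseteq> L \<and> (\<forall>A\<in>L. \<forall>B\<in>L. commutator A B \<in> L)}"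

definition g_QWOA_Search :: "(bool ^ 'n) set \<Rightarrow> 'n::finite op set" where
  "g_QWOA_Search M = lie_generated {iop (H_C M), iop H_M}"

end

theory Submission
  imports Defs
begin

text \<open>Both generators lie in the real space of operators that equal \<open>i a\<close> on \<open>M \<times> M\<close>,
  \<open>i b\<close> on \<open>M\<^sup>c \<times> M\<^sup>c\<close>, \<open>x + i y\<close> on \<open>M \<times> M\<^sup>c\<close> and \<open>-x + i y\<close> on \<open>M\<^sup>c \<times> M\<close>, plus \<open>i e\<close> times the
  projector onto \<open>M\<close>, with \<open>a, b, x, y, e\<close> real. Block-constant operators multiply like \<open>2 \<times> 2\<close>
  matrices whose inner sums are weighted by \<open>|M|\<close> and \<open>|M\<^sup>c|\<close>, so this space is closed under
  commutators. Conversely, the generators and three iterated commutators span it, because the only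
  quantity that has to be inverted is \<open>|M| + |M\<^sup>c| = 2\<^sup>n\<close>. Hence the Lie algebra is this space; its five
  coordinates are independent unless \<open>|M| = 1\<close>, when the projector onto \<open>M\<close> is the \<open>M \<times> M\<close> block.\<close>

lemma card_add_card_Compl:
  fixes A :: "'a::finite set"
  shows "card A + card (- A) = CARD('a)"
  using card_Un_disjoint[of A "- A"] by (simp add: Compl_partition)

lemma sum_const_plus_delta_mult:
  fixes c c' e e' :: "'a::comm_semiring_1"
  assumes "finite A"
  shows "(\<Sum>y\<in>A. (c + (if z = y then e else 0)) * (c' + (if y = w then e' else 0))) =
    of_nat (card A) * c * c' + (if z \<in> A then e * c' else 0) + (if w \<in> A then c * e' else 0)
    + (if z = w \<and> z \<in> A then e * e' else 0)"
proof -
  have "(\<Sum>y\<in>A. (c + (if z = y then e else 0)) * (c' + (if y = w then e' else 0))) =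
    (\<Sum>y\<in>A. c * c' + (if z = y then e * c' else 0) + (if y = w then c * e' else 0)
              + (if z = w then (if z = y then e * e' else 0) else 0))"
    by (rule sum.cong) (auto simp: algebra_simps)
  then show ?thesis
    using assms by (cases "z = w") (simp_all add: sum.distrib mult.assoc)
qed

lemma subspace_lie_generated: "subspace (lie_generated G)"
  unfolding lie_generated_def by (rule subspace_Inter) blast

lemma lie_generated_superset: "G \<subseteq> lie_generated G"
  unfolding lie_generated_def by blast

lemma commutator_in_lie_generated:
  "A \<in> lie_generated G \<Longrightarrow> B \<in> lie_generated G \<Longrightarrow> commutator A B \<in> lie_generated G"
  unfolding lie_generated_def by blast

lemma lie_generated_minimal:
  assumes "subspace L" "G \<subseteq> L" "\<And>A B. A \<in> L \<Longrightarrow> B \<in> L \<Longrightarrow> commutator A B \<in> L"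
  shows "lie_generated G \<subseteq> L"
  unfolding lie_generated_def using assms by (intro Inter_lower) blast

definition block_op ::
  "(bool ^ 'n::finite) set \<Rightarrow> complex \<Rightarrow> complex \<Rightarrow> complex \<Rightarrow> complex \<Rightarrow> complex \<Rightarrow> 'n op" where
  "block_op M \<alpha> \<beta> \<gamma> \<delta> \<epsilon> =
     (\<chi> z w. (if z \<in> M then (if w \<in> M then \<alpha> else \<gamma>) else (if w \<in> M then \<delta> else \<beta>))
            + (if z = w \<and> z \<in> M then \<epsilon> else 0))"

lemma block_op_mult:
  fixes M :: "(bool ^ 'n::finite) set"
  defines "m \<equiv> of_nat (card M)" and "k \<equiv> of_nat (card (- M))"
  shows "block_op M \<alpha> \<beta> \<gamma> \<delta> \<epsilon> ** block_op M \<alpha>' \<beta>' \<gamma>' \<delta>' \<epsilon>' =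
    block_op M (m * \<alpha> * \<alpha>' + k * \<gamma> * \<delta>' + \<alpha> * \<epsilon>' + \<epsilon> * \<alpha>')
               (m * \<delta> * \<gamma>' + k * \<beta> * \<beta>')
               (m * \<alpha> * \<gamma>' + k * \<gamma> * \<beta>' + \<epsilon> * \<gamma>')
               (m * \<delta> * \<alpha>' + k * \<beta> * \<delta>' + \<delta> * \<epsilon>')
               (\<epsilon> * \<epsilon>')"
    (is "?A ** ?B = ?C")
proof -
  have "(?A ** ?B) $ z $ w = ?C $ z $ w" for z w
  proof -
    have "(?A ** ?B) $ z $ w = (\<Sum>y\<in>M. ?A $ z $ y * ?B $ y $ w) + (\<Sum>y\<in>-M. ?A $ z $ y * ?B $ y $ w)"
      using sum.subset_diff[of M UNIV] by (simp add: matrix_matrix_mult_def Compl_eq_Diff_UNIV add.commute)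
    also have "(\<Sum>y\<in>M. ?A $ z $ y * ?B $ y $ w) =
      (\<Sum>y\<in>M. ((if z \<in> M then \<alpha> else \<delta>) + (if z = y then \<epsilon> else 0))
             * ((if w \<in> M then \<alpha>' else \<gamma>') + (if y = w then \<epsilon>' else 0)))"
      by (rule sum.cong) (auto simp: block_op_def)
    also have "(\<Sum>y\<in>-M. ?A $ z $ y * ?B $ y $ w) =
      (\<Sum>y\<in>-M. (if z \<in> M then \<gamma> else \<beta>) * (if w \<in> M then \<delta>' else \<beta>'))"
      by (rule sum.cong) (auto simp: block_op_def)
    finally show ?thesis
      unfolding sum_const_plus_delta_mult[OF finite] sum_constant
      by (cases "z \<in> M"; cases "w \<in> M"; cases "z = w")
        (simp_all add: block_op_def m_def k_def algebra_simps)
  qed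
  then show ?thesis by (simp add: vec_eq_iff)
qed

lemma block_op_diff:
  "block_op M \<alpha> \<beta> \<gamma> \<delta> \<epsilon> - block_op M \<alpha>' \<beta>' \<gamma>' \<delta>' \<epsilon>' =
   block_op M (\<alpha> - \<alpha>') (\<beta> - \<beta>') (\<gamma> - \<gamma>') (\<delta> - \<delta>') (\<epsilon> - \<epsilon>')"
  by (simp add: vec_eq_iff block_op_def)

definition skew_block :: "(bool ^ 'n::finite) set \<Rightarrow> real \<Rightarrow> real \<Rightarrow> real \<Rightarrow> real \<Rightarrow> real \<Rightarrow> 'n op" where
  "skew_block M a b x y e =
     block_op M (\<i> * of_real a) (\<i> * of_real b) (of_real x + \<i> * of_real y)
                (- of_real x + \<i> * of_real y) (\<i> * of_real e)"

lemma skew_block_entry: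
  "skew_block M a b x y e $ z $ w =
     (if z \<in> M then (if w \<in> M then \<i> * of_real a else of_real x + \<i> * of_real y)
      else (if w \<in> M then - of_real x + \<i> * of_real y else \<i> * of_real b))
     + (if z = w \<and> z \<in> M then \<i> * of_real e else 0)"
  by (simp add: skew_block_def block_op_def)

lemma skew_block_lincomb:
  "c *\<^sub>R skew_block M a b x y e + d *\<^sub>R skew_block M a' b' x' y' e' =
   skew_block M (c * a + d * a') (c * b + d * b') (c * x + d * x') (c * y + d * y') (c * e + d * e')"
  by (simp add: vec_eq_iff skew_block_entry) (simp add: scaleR_conv_of_real algebra_simps)

lemma skew_block_commutator:
  fixes M :: "(bool ^ 'n::finite) set"
  defines "m \<equiv> real (card M)" and "k \<equiv> real (card (- M))"
  shows "commutator (skew_block M a b x y e) (skew_block M a' b' x' y' e') =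
    skew_block M (2 * k * (x * y' - y * x')) (- 2 * m * (x * y' - y * x'))
      (- m * (a * y' - a' * y) - k * (b' * y - b * y') - (e * y' - e' * y))
      (m * (a * x' - a' * x) + k * (b' * x - b * x') + (e * x' - e' * x)) 0"
  unfolding commutator_def skew_block_def block_op_mult block_op_diff
  by (simp add: complex_eq_iff m_def k_def algebra_simps)

lemma iop_H_C: "iop (H_C M) = skew_block M 0 0 0 0 1"
  by (simp add: vec_eq_iff skew_block_entry iop_def H_C_def)

lemma iop_H_M: "iop H_M = skew_block M 1 1 0 1 0"
  by (simp add: vec_eq_iff skew_block_entry iop_def H_M_def)

lemma linear_skew_block: "linear (\<lambda>(a, b, x, y, e). skew_block M a b x y e)"
proof (rule linearI)
  fix u v :: "real \<times> real \<times> real \<times> real \<times> real" and c :: real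
  show "(case u + v of (a, b, x, y, e) \<Rightarrow> skew_block M a b x y e) =
    (case u of (a, b, x, y, e) \<Rightarrow> skew_block M a b x y e) +
    (case v of (a, b, x, y, e) \<Rightarrow> skew_block M a b x y e)"
    using skew_block_lincomb[of 1 M _ _ _ _ _ 1] by (cases u; cases v) simp
  show "(case c *\<^sub>R u of (a, b, x, y, e) \<Rightarrow> skew_block M a b x y e) =
    c *\<^sub>R (case u of (a, b, x, y, e) \<Rightarrow> skew_block M a b x y e)"
    using skew_block_lincomb[of c M _ _ _ _ _ 0 0 0 0 0 0] by (cases u) simp
qed

lemma skew_block_lincomb_in_subspace:
  assumes "subspace S" "skew_block M a b x y e \<in> S" "skew_block M a' b' x' y' e' \<in> S"
    and "A = c * a + d * a'" "B = c * b + d * b'" "X = c * x + d * x'" "Y = c * y + d * y'"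
      "E = c * e + d * e'"
  shows "skew_block M A B X Y E \<in> S"
  unfolding assms(4-8) skew_block_lincomb[symmetric] using assms(1-3) by (intro subspace_add subspace_scale)

definition skew_block_algebra :: "(bool ^ 'n::finite) set \<Rightarrow> 'n op set" where
  "skew_block_algebra M = (\<lambda>(a, b, x, y, e). skew_block M a b x y e) ` UNIV"

lemma skew_block_in_algebra: "skew_block M a b x y e \<in> skew_block_algebra M"
  unfolding skew_block_algebra_def by (rule image_eqI[where x = "(a, b, x, y, e)"]) auto

lemma subspace_skew_block_algebra: "subspace (skew_block_algebra M)"
  unfolding skew_block_algebra_def by (rule linear_subspace_image[OF linear_skew_block subspace_UNIV])

lemma commutator_in_skew_block_algebra:
  "A \<in> skew_block_algebra M \<Longrightarrow> B \<in> skew_block_algebra M \<Longrightarrow> commutator A B \<in> skew_block_algebra M"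
  by (auto simp: skew_block_algebra_def skew_block_commutator
      intro: skew_block_in_algebra[unfolded skew_block_algebra_def])

lemma g_QWOA_Search_subset_skew_block_algebra: "g_QWOA_Search M \<subseteq> skew_block_algebra M"
  unfolding g_QWOA_Search_def iop_H_C iop_H_M[of M]
  by (rule lie_generated_minimal)
    (simp_all add: subspace_skew_block_algebra skew_block_in_algebra commutator_in_skew_block_algebra)

lemma skew_block_algebra_subset_subspace:
  assumes S: "subspace S"
    and A: "skew_block M 1 0 0 0 0 \<in> S" and B: "skew_block M 0 1 0 0 0 \<in> S"
    and X: "skew_block M 0 0 1 0 0 \<in> S" and Y: "skew_block M 0 0 0 1 0 \<in> S"
    and E: "skew_block M 0 0 0 0 1 \<in> S"
  shows "skew_block_algebra M \<subseteq> S"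
proof
  fix G assume "G \<in> skew_block_algebra M"
  then obtain a b x y e where G: "G = skew_block M a b x y e"
    unfolding skew_block_algebra_def by auto
  have "skew_block M a b 0 0 0 \<in> S"
    by (rule skew_block_lincomb_in_subspace[OF S A B, where c = a and d = b]) simp_all
  moreover have "skew_block M 0 0 x y 0 \<in> S"
    by (rule skew_block_lincomb_in_subspace[OF S X Y, where c = x and d = y]) simp_all
  ultimately have "skew_block M a b x y 0 \<in> S"
    by (rule skew_block_lincomb_in_subspace[OF S, where c = 1 and d = 1]) simp_all
  then have "skew_block M a b x y e \<in> S"
    by (rule skew_block_lincomb_in_subspace[OF S _ E, where c = 1 and d = e]) simp_all
  then show "G \<in> S" by (simp add: G)
qed

lemma skew_block_algebra_subset_g_QWOA_Search:
  fixes M :: "(bool ^ 'n::finite) set"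
  shows "skew_block_algebra M \<subseteq> g_QWOA_Search M"
proof -
  let ?g = "g_QWOA_Search M"
  define m where "m = real (card M)"
  define k where "k = real (card (- M))"
  have "m + k = real CARD(bool ^ 'n)"
    using card_add_card_Compl[of M] unfolding m_def k_def by (metis of_nat_add)
  then have mk: "m + k \<noteq> 0" by simp
  have sub: "subspace ?g"
    unfolding g_QWOA_Search_def by (rule subspace_lie_generated)
  have comm: "commutator A B \<in> ?g" if "A \<in> ?g" "B \<in> ?g" for A B
    using that unfolding g_QWOA_Search_def by (rule commutator_in_lie_generated)
  have E: "skew_block M 0 0 0 0 1 \<in> ?g" and H: "skew_block M 1 1 0 1 0 \<in> ?g"
    using lie_generated_superset unfolding g_QWOA_Search_def iop_H_C iop_H_M[of M] by blast+
  have X: "skew_block M 0 0 1 0 0 \<in> ?g"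
    using comm[OF H E] by (simp add: skew_block_commutator)
  have P: "skew_block M (2 * k) (- 2 * m) 0 (k - m) 0 \<in> ?g"
    using comm[OF X H] by (simp add: skew_block_commutator m_def k_def)
  have Q: "skew_block M (2 * k * (k - m)) (- 2 * m * (k - m)) 0 (- 4 * k * m) 0 \<in> ?g"
    using comm[OF X P] by (simp add: skew_block_commutator m_def k_def algebra_simps)
  \<comment> \<open>\<open>Q - (k - m) P\<close> has \<open>y\<close>-coordinate \<open>-4 k m - (k - m)\<^sup>2 = -(m + k)\<^sup>2\<close> and no other.\<close>
  have Y: "skew_block M 0 0 0 1 0 \<in> ?g"
    by (rule skew_block_lincomb_in_subspace[OF sub Q P,
          where c = "- 1 / (m + k)\<^sup>2" and d = "(k - m) / (m + k)\<^sup>2"])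
      (use mk in \<open>simp_all add: divide_simps, simp_all add: power2_eq_square algebra_simps\<close>)
  have AB: "skew_block M 1 1 0 0 0 \<in> ?g"
    by (rule skew_block_lincomb_in_subspace[OF sub H Y, where c = 1 and d = "- 1"]) simp_all
  have AB': "skew_block M (2 * k) (- 2 * m) 0 0 0 \<in> ?g"
    by (rule skew_block_lincomb_in_subspace[OF sub P Y, where c = 1 and d = "m - k"]) simp_all
  have A: "skew_block M 1 0 0 0 0 \<in> ?g"
    by (rule skew_block_lincomb_in_subspace[OF sub AB AB',
          where c = "m / (m + k)" and d = "1 / (2 * (m + k))"])
      (use mk in \<open>simp_all add: divide_simps, simp_all add: algebra_simps\<close>)
  have B: "skew_block M 0 1 0 0 0 \<in> ?g"
    by (rule skew_block_lincomb_in_subspace[OF sub AB AB',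
          where c = "k / (m + k)" and d = "- 1 / (2 * (m + k))"])
      (use mk in \<open>simp_all add: divide_simps, simp_all add: algebra_simps\<close>)
  show ?thesis
    using skew_block_algebra_subset_subspace[OF sub A B X Y E] .
qed

lemma g_QWOA_Search_eq_skew_block_algebra: "g_QWOA_Search M = skew_block_algebra M"
  using g_QWOA_Search_subset_skew_block_algebra skew_block_algebra_subset_g_QWOA_Search by blast

lemma skew_block_eq_0_imp_unmarked_coords:
  assumes "skew_block M a b x y e = 0" "z \<in> M" "v \<notin> M"
  shows "a + e = 0 \<and> b = 0 \<and> x = 0 \<and> y = 0"
proof -
  have "skew_block M a b x y e $ i $ j = 0" for i j
    using assms(1) by simp
  from this[of z z] this[of v v] this[of z v] assms(2,3) show ?thesis
    by (auto simp: skew_block_entry complex_eq_iff split: if_splits)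
qed

lemma skew_block_eq_0_imp_marked_coord:
  assumes "skew_block M a b x y e = 0" "z \<in> M" "z' \<in> M" "z \<noteq> z'"
  shows "a = 0"
proof -
  have "skew_block M a b x y e $ z $ z' = 0"
    using assms(1) by simp
  with assms(2-4) show ?thesis
    by (simp add: skew_block_entry complex_eq_iff)
qed

lemma dim_skew_block_algebra:
  assumes "z \<in> M" "z' \<in> M" "z \<noteq> z'" "v \<notin> M"
  shows "dim (skew_block_algebra M) = 5"
proof -
  have "inj (\<lambda>(a, b, x, y, e). skew_block M a b x y e)"
    unfolding linear_injective_0[OF linear_skew_block]
    using skew_block_eq_0_imp_unmarked_coords[OF _ assms(1,4)]
      skew_block_eq_0_imp_marked_coord[OF _ assms(1-3)]
    by (fastforce simp: zero_prod_def)
  then show ?thesis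
    unfolding skew_block_algebra_def by (simp add: dim_image_eq[OF linear_skew_block])
qed

lemma skew_block_singleton_absorb_diagonal:
  "skew_block {z} a b x y e = skew_block {z} (a + e) b x y 0"
  by (auto simp: vec_eq_iff skew_block_entry algebra_simps)

lemma dim_skew_block_algebra_singleton:
  assumes "v \<noteq> z"
  shows "dim (skew_block_algebra {z}) = 4"
proof -
  let ?f = "\<lambda>(a, b, x, y). skew_block {z} a b x y 0"
  have "linear (\<lambda>(a, b, x, y). (a, b, x, y, 0 :: real))"
    by (rule linearI) (auto split: prod.splits)
  from linear_compose[OF this linear_skew_block]
  have lin: "linear ?f"
    by (simp add: comp_def case_prod_unfold)
  have "skew_block_algebra {z} = range ?f"
    unfolding skew_block_algebra_def
  proof (intro equalityI subsetI)
    fix G assume "G \<in> range (\<lambda>(a, b, x, y, e). skew_block {z} a b x y e)"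
    then obtain a b x y e where "G = skew_block {z} a b x y e"
      by auto
    with skew_block_singleton_absorb_diagonal[of z a b x y e] have "G = ?f (a + e, b, x, y)"
      by simp
    then show "G \<in> range ?f"
      by blast
  next
    fix G assume "G \<in> range ?f"
    then show "G \<in> range (\<lambda>(a, b, x, y, e). skew_block {z} a b x y e)"
      by (auto intro!: image_eqI[where x = "(_, _, _, _, 0)"])
  qed
  moreover have "inj ?f"
    unfolding linear_injective_0[OF lin]
    using skew_block_eq_0_imp_unmarked_coords[of "{z}" _ _ _ _ _ z v] assms
    by (fastforce simp: zero_prod_def)
  ultimately show ?thesis
    by (simp add: dim_image_eq[OF lin])
qed

theorem theorem5:
  fixes M :: "(bool ^ 'n::finite) set"
  assumes "1 \<le> card M" and "card M < 2 ^ CARD('n)"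
  shows "dim (g_QWOA_Search M) = (if card M = 1 then 4 else 5)"
proof -
  from assms(1) obtain z where z: "z \<in> M"
    by fastforce
  from assms(2) have "M \<noteq> UNIV"
    by auto
  then obtain v where v: "v \<notin> M"
    by blast
  show ?thesis
  proof (cases "card M = 1")
    case True
    with z have "M = {z}"
      by (metis card_1_singletonE singletonD)
    with v show ?thesis
      by (simp add: g_QWOA_Search_eq_skew_block_algebra dim_skew_block_algebra_singleton)
  next
    case False
    with assms(1) z have "M - {z} \<noteq> {}"
      by (metis One_nat_def card.empty card_Suc_Diff1 finite)
    then obtain z' where "z' \<in> M" "z' \<noteq> z"
      by blast
    with z v False show ?thesis
      by (simp add: g_QWOA_Search_eq_skew_block_algebra dim_skew_block_algebra)
  qed
qed

end
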